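(* Let $A_n=1$ if $n=2^{k+1}-2$ for some integer $k\ge0$ and $A_n=0$ otherwise, and let $D(n)=\det\left(A_{i+j}\right)_{i,j=0}^{n-1}$ for $n\ge1$, $D(0)=1$. Let $k>0$. Then $$D(2^{k+1}+n)=-D(n)\quad\text{for }0\le n<2^k,\qquad D(2^{k+1}+n)=D(n)\quad\text{for }2^k\le n<2^{k+1}.$$ *)

theory Defs
  imports "Jordan_Normal_Form.Determinant"
begin

definition A :: "nat \<Rightarrow> int" where
  "A n = (if \<exists>k::nat. n = 2^(k+1) - 2 then 1 else 0)"

definition D :: "nat \<Rightarrow> int" where
  "D n = (if n = 0 then 1 else det (mat n n (\<lambda>(i,j). A (i + j))))"

end

theory Submission
  imports Defs
begin

text \<open>
  For \<open>N = 2^j\<close> the only index of the form \<open>2^(k+1) - 2\<close> in the window \<open>[N - 1, 4N - 3]\<close>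
  is \<open>2N - 2\<close>. In the Hankel matrix of size \<open>N + n\<close> (\<open>n < N\<close>) the last row and column
  therefore each contain a single \<open>1\<close>, at position \<open>m = N - 1 - n\<close>; expanding along both
  deletes the pair of indices \<open>m, N + n - 1\<close> at the cost of a sign. The remaining matrix
  is a Hankel matrix whose index set has a gap after \<open>m\<close>, and the same window argument
  applies to it again. After \<open>n\<close> such steps one is left with the Hankel matrix of size \<open>m\<close>,
  so \<open>D (N + n) = (-1)^n D (N - 1 - n)\<close>. Applying this reflection once with \<open>N = 2^(k+1)\<close>
  and once with \<open>N = 2^k\<close> gives the periodicity, the signs being governed by the parity
  of \<open>2^k\<close>.
\<close>

lemma D_eq_det: "D n = det (mat n n (\<lambda>(i,j). A (i + j)))"
  by (cases "n = 0") (simp_all add: D_def det_def)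

lemma det_unit_row:
  fixes M :: "'a :: comm_ring_1 mat"
  assumes M: "M \<in> carrier_mat n n" and i: "i < n" and c: "c < n"
    and row: "\<And>j. j < n \<Longrightarrow> M $$ (i,j) = (if j = c then 1 else 0)"
  shows "det M = (-1)^(i+c) * det (mat_delete M i c)"
proof -
  have "det M = (\<Sum>j<n. M $$ (i,j) * cofactor M i j)"
    by (rule laplace_expansion_row[OF M i])
  also have "\<dots> = (\<Sum>j\<in>{c}. M $$ (i,j) * cofactor M i j)"
    by (rule sum.mono_neutral_right) (use c row in auto)
  finally show ?thesis using row[OF c] by (simp add: cofactor_def)
qed

lemma det_unit_col:
  fixes M :: "'a :: comm_ring_1 mat"
  assumes M: "M \<in> carrier_mat n n" and j: "j < n" and c: "c < n"
    and col: "\<And>i. i < n \<Longrightarrow> M $$ (i,j) = (if i = c then 1 else 0)"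
  shows "det M = (-1)^(c+j) * det (mat_delete M c j)"
proof -
  have "det M = (\<Sum>i<n. M $$ (i,j) * cofactor M i j)"
    by (rule laplace_expansion_column[OF M j])
  also have "\<dots> = (\<Sum>i\<in>{c}. M $$ (i,j) * cofactor M i j)"
    by (rule sum.mono_neutral_right) (use c col in auto)
  finally show ?thesis using col[OF c] by (simp add: cofactor_def)
qed

lemma det_unit_last_row_col:
  fixes M :: "'a :: comm_ring_1 mat"
  assumes M: "M \<in> carrier_mat (Suc (Suc s)) (Suc (Suc s))" and c: "c < Suc s"
    and row: "\<And>j. j < Suc (Suc s) \<Longrightarrow> M $$ (Suc s, j) = (if j = c then 1 else 0)"
    and col: "\<And>i. i < Suc (Suc s) \<Longrightarrow> M $$ (i, Suc s) = (if i = c then 1 else 0)"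
  shows "det M = - det (mat_delete (mat_delete M (Suc s) c) c s)"
proof -
  let ?M' = "mat_delete M (Suc s) c"
  have "det M = (-1)^(Suc s + c) * det ?M'"
    by (rule det_unit_row[OF M _ _ row]) (use c in auto)
  also have "det ?M' = (-1)^(c + s) * det (mat_delete ?M' c s)"
  proof (rule det_unit_col)
    show "?M' \<in> carrier_mat (Suc s) (Suc s)" using M by (simp add: mat_delete_def)
  qed (use M c col in \<open>auto simp: mat_delete_def\<close>)
  also have "(-1::'a)^(Suc s + c) * ((-1)^(c + s) * x) = - x" for x
    by (simp add: mult.assoc[symmetric] power_add[symmetric] add.commute)
  finally show ?thesis .
qed

lemma A_two_power_window:
  assumes lo: "2^j - 1 \<le> x" and hi: "x \<le> 2^(j+2) - 3"
  shows "A x = (if x = 2^(j+1) - 2 then 1 else 0)"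
proof -
  have "k = j" if k: "x = 2^(k+1) - 2" for k
  proof -
    have pow: "(2::nat)^(k+1) = 2 * 2^k" "(2::nat)^(j+2) = 4 * 2^j" "(1::nat) \<le> 2^k" "(1::nat) \<le> 2^j"
      by simp_all
    have "(2::nat)^j < 2^(k+1)" using k lo pow by linarith
    then have "j < k+1" by (rule power_less_imp_less_exp[rotated]) simp
    have "(2::nat)^(k+1) < 2^(j+2)" using k hi pow by linarith
    then have "k+1 < j+2" by (rule power_less_imp_less_exp[rotated]) simp
    with \<open>j < k+1\<close> show "k = j" by simp
  qed
  then have "(\<exists>k. x = 2^(k+1) - 2) \<longleftrightarrow> x = 2^(j+1) - 2" by blast
  then show ?thesis by (simp only: A_def)
qed

text \<open>\<open>gap_hankel m d s\<close> is the \<open>s \<times> s\<close> principal submatrix of the Hankel matrix of \<open>A\<close>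
  obtained by deleting the rows and columns \<open>m, \<dots>, m + d - 1\<close>.\<close>

definition gap_index :: "nat \<Rightarrow> nat \<Rightarrow> nat \<Rightarrow> nat" where
  "gap_index m d i = (if i < m then i else i + d)"

definition gap_hankel :: "nat \<Rightarrow> nat \<Rightarrow> nat \<Rightarrow> int mat" where
  "gap_hankel m d s = mat s s (\<lambda>(i,j). A (gap_index m d i + gap_index m d j))"

lemma gap_hankel_no_gap: "gap_hankel m 0 s = mat s s (\<lambda>(i,j). A (i + j))"
  by (auto simp: gap_hankel_def gap_index_def)

lemma det_gap_hankel_base:
  assumes N: "m + d + 1 = 2^j"
  shows "det (gap_hankel m d (Suc m)) = D m"
proof -
  have "gap_hankel m d (Suc m) $$ (m, c) = (if c = m then 1 else 0)" if "c < Suc m" for c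
    using that N A_two_power_window[of j "gap_index m d m + gap_index m d c"]
    by (auto simp: gap_hankel_def gap_index_def)
  then have "det (gap_hankel m d (Suc m)) = (-1)^(m+m) * det (mat_delete (gap_hankel m d (Suc m)) m m)"
    by (intro det_unit_row) (auto simp: gap_hankel_def)
  also have "mat_delete (gap_hankel m d (Suc m)) m m = mat m m (\<lambda>(i,j). A (i + j))"
    by (rule eq_matI) (auto simp: mat_delete_def gap_hankel_def gap_index_def)
  finally show ?thesis by (simp add: D_eq_det)
qed

lemma det_gap_hankel_step:
  assumes N: "m + d + r + 2 = 2^j"
  shows "det (gap_hankel m d (m + 2*r + 3)) = - det (gap_hankel m (Suc d) (m + 2*r + 1))"
proof -
  define s where "s = m + 2*r + 1"
  have size: "m + 2*r + 3 = Suc (Suc s)" by (simp add: s_def)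
  have unit: "A (gap_index m d (Suc s) + gap_index m d c) = (if c = m then 1 else 0)"
    if "c < Suc (Suc s)" for c
    using that N A_two_power_window[of j "gap_index m d (Suc s) + gap_index m d c"]
    by (auto simp: gap_index_def s_def)
  have "det (gap_hankel m d (Suc (Suc s)))
      = - det (mat_delete (mat_delete (gap_hankel m d (Suc (Suc s))) (Suc s) m) m s)"
    by (rule det_unit_last_row_col) (use unit in \<open>auto simp: gap_hankel_def s_def add.commute\<close>)
  also have "mat_delete (mat_delete (gap_hankel m d (Suc (Suc s))) (Suc s) m) m s
      = gap_hankel m (Suc d) s"
    by (rule eq_matI) (auto simp: mat_delete_def gap_hankel_def gap_index_def)
  finally show ?thesis by (simp only: size s_def)
qed

lemma det_gap_hankel:
  assumes "m + d + r + 1 = 2^j"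
  shows "det (gap_hankel m d (m + 2*r + 1)) = (-1)^r * D m"
  using assms
proof (induction r arbitrary: d)
  case 0
  then show ?case using det_gap_hankel_base by simp
next
  case (Suc r)
  have "det (gap_hankel m d (m + 2 * Suc r + 1)) = - det (gap_hankel m (Suc d) (m + 2*r + 1))"
    using det_gap_hankel_step[of m d r j] Suc.prems by (simp add: numeral_3_eq_3)
  also have "\<dots> = - ((-1)^r * D m)" using Suc.IH[of "Suc d"] Suc.prems by simp
  finally show ?case by simp
qed

lemma D_two_power_reflect:
  assumes "n < 2^j"
  shows "D (2^j + n) = (-1)^n * D (2^j - 1 - n)"
proof -
  define m where "m = 2^j - 1 - n"
  have size: "2^j + n = m + 2*n + 1" using assms by (simp add: m_def)
  have "D (2^j + n) = det (gap_hankel m 0 (m + 2*n + 1))"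
    by (simp only: size gap_hankel_no_gap D_eq_det)
  also have "\<dots> = (-1)^n * D m"
    by (rule det_gap_hankel) (use assms in \<open>simp add: m_def\<close>)
  finally show ?thesis by (simp only: m_def)
qed

theorem corollary2p3:
  fixes k :: nat
  assumes "k > 0"
  shows "(\<forall>n. n < 2^k \<longrightarrow> D (2^(k+1) + n) = - D n)
       \<and> (\<forall>n. 2^k \<le> n \<and> n < 2^(k+1) \<longrightarrow> D (2^(k+1) + n) = D n)"
proof -
  define M :: nat where "M = 2^k"
  have M2: "2^(k+1) = 2*M" and even_M: "even M" using assms by (simp_all add: M_def)
  have reflect_2M: "D (2*M + n) = (-1)^n * D (2*M - 1 - n)" if "n < 2*M" for n
    using D_two_power_reflect[of n "k+1"] that by (simp add: M_def)
  have reflect_M: "D (M + t) = (-1)^t * D (M - 1 - t)" if "t < M" for t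
    using D_two_power_reflect[of t k] that by (simp add: M_def)
  have low: "D (2*M + n) = - D n" if n: "n < M" for n
  proof -
    have "D (2*M + n) = ((-1)^n * (-1)^(M - 1 - n)) * D n"
      using reflect_2M[of n] reflect_M[of "M - 1 - n"] n
      by (simp add: Suc_diff_Suc numeral_2_eq_2 diff_diff_left)
    also have "(-1::int)^n * (-1)^(M - 1 - n) = (-1)^(M - 1)"
      using n by (simp add: power_add[symmetric])
    also have "(-1::int)^(M - 1) = -1" using even_M n by simp
    finally show ?thesis by simp
  qed
  have high: "D (2*M + n) = D n" if n: "M \<le> n" "n < 2*M" for n
  proof -
    obtain t where t: "n = M + t" "t < M" using n by (metis add_less_cancel_left le_Suc_ex mult_2)
    have "(-1::int)^n = (-1)^t" using even_M t(1) by (simp add: power_add)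
    then show ?thesis using reflect_2M[of n] reflect_M[of t] n t by simp
  qed
  show ?thesis using low high by (simp add: M_def M2)
qed

end
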